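(* Let $\beta\in[0,1]$ and $f\in\mathcal{A}_{\beta}$ with $f(z)=z+\sum_{n=2}^{\infty}a_nz^n$. Then $$|a_3-a_2^2|\le\frac{2}{3-2\beta}.$$ The inequality is sharp, with equality for the function $f_2\in\mathcal{A}_\beta$ defined by $\beta f_2(z)/z+(1-\beta)f_2'(z)=\frac{1+z^2}{1-z^2}$.
   Context: $\mathbb{D}=\{z\in\mathbb{C}:|z|<1\}$. For $\beta\in[0,1]$, $\mathcal{A}_{\beta}$ is the set of analytic functions $f$ on $\mathbb{D}$ with $f(0)=0$, $f'(0)=1$ (so $f(z)=z+\sum_{n\ge2}a_nz^n$) such that $\operatorname{Re}\big(\beta f(z)/z+(1-\beta)f'(z)\big)>0$ for all $z\in\mathbb{D}$. *)

theory Defs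
  imports "HOL-Complex_Analysis.Complex_Analysis"
begin

text \<open>The class A_beta. The quotient f(z)/z is understood for z \<noteq> 0; at z = 0 its
  (removable) value is f'(0) = 1, so the positivity condition there reads 1 > 0 automatically.\<close>
definition A_beta :: "real \<Rightarrow> (complex \<Rightarrow> complex) set" where
  "A_beta \<beta> = {f. f holomorphic_on ball 0 1 \<and> f 0 = 0 \<and> deriv f 0 = 1 \<and>
     (\<forall>z\<in>ball 0 1 - {0}. Re (of_real \<beta> * f z / z + of_real (1 - \<beta>) * deriv f z) > 0)}"

definition taylor_coeff :: "(complex \<Rightarrow> complex) \<Rightarrow> nat \<Rightarrow> complex" where
  "taylor_coeff f n = (deriv ^^ n) f 0 / of_nat (fact n)"

end

theory Submission
  imports Defs
begin

(* The function p(z) = beta f(z)/z + (1 - beta) f'(z) has positive real part, p(0) = 1, and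
   Taylor coefficients p_n = (1 + n (1 - beta)) a_(n+1). Writing (p - 1)/(p + 1) = z g(z) with
   |g| <= 1, the Schwarz-Pick inequality |g'(0)| <= 1 - |g(0)|^2 gives the Caratheodory bound
   |p_2 - p_1^2/2| <= 2 - |p_1|^2/2. The estimate for a_3 - a_2^2 then follows from the triangle
   inequality, because (2 - beta)^2 lies between 3 - 2 beta and 2 (3 - 2 beta).
   Equality: p(z) = (1 + z^2)/(1 - z^2) forces a_2 = 0 and a_3 = 2/(3 - 2 beta). The function
   f(z) = z psi(z^2) realises this p as soon as psi(u) + 2 (1 - beta) u psi'(u) = (1 + u)/(1 - u),
   and this equation is solved by the power series with coefficients 2/(1 + 2 n (1 - beta)). *)

lemma taylor_coeff_eq_fps_nth:
  assumes "f has_fps_expansion F"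
  shows "taylor_coeff f n = F $ n"
  by (simp add: taylor_coeff_def fps_nth_fps_expansion[OF assms])

lemma norm_cayley_less_1:
  fixes w :: complex
  assumes "Re w > 0"
  shows "norm ((w - 1) / (w + 1)) < 1"
proof -
  have "(norm (w - 1))\<^sup>2 < (norm (w + 1))\<^sup>2"
    using assms by (simp only: cmod_power2) (simp add: power2_eq_square algebra_simps)
  then have "norm (w - 1) < norm (w + 1)"
    by (rule power_less_imp_less_base) simp
  then show ?thesis
    by (simp add: norm_divide divide_less_eq)
qed

lemma Re_inverse_cayley_pos:
  fixes u :: complex
  assumes "norm u < 1"
  shows "Re ((1 + u) / (1 - u)) > 0"
proof -
  have "Re ((1 + u) / (1 - u)) = (1 - (norm u)\<^sup>2) / (norm (1 - u))\<^sup>2"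
    unfolding Re_divide cmod_power2 by (simp add: power2_eq_square algebra_simps)
  moreover have "u \<noteq> 1" using assms by auto
  ultimately show ?thesis
    using assms by (simp add: abs_square_less_1)
qed

lemma schwarz_pick_deriv_0_strict:
  assumes holg: "g holomorphic_on ball 0 1"
    and lt: "\<And>z. z \<in> ball 0 1 \<Longrightarrow> norm (g z) < 1"
  shows "norm (deriv g 0) \<le> 1 - (norm (g 0))\<^sup>2"
proof -
  define a where "a = g 0"
  have a: "norm a < 1" using lt[of 0] by (simp add: a_def)
  have den: "1 - cnj a * g z \<noteq> 0" if "z \<in> ball 0 1" for z
  proof -
    have "norm (cnj a * g z) < 1"
      using a lt[OF that] mult_left_le_one_le[of "norm (g z)" "norm a"] by (simp add: norm_mult)
    then show ?thesis by auto
  qed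
  define h where "h z = (g z - a) / (1 - cnj a * g z)" for z
  have holh: "h holomorphic_on ball 0 1"
    unfolding h_def using holg den by (intro holomorphic_intros) auto
  have h0: "h 0 = 0" by (simp add: h_def a_def)
  have hlt: "norm (h z) < 1" if "norm z < 1" for z
    using Moebius_function_norm_lt_1[OF a lt, of z 0] that
    by (simp add: Moebius_function_simple h_def)
  define r where "r = 1 - (norm a)\<^sup>2"
  have r: "0 < r" "r \<le> 1"
    using a by (simp_all add: r_def abs_square_less_1)
  have "1 - cnj a * a = of_real r"
    using complex_norm_square[of a] by (simp add: r_def mult.commute)
  moreover have "(g has_field_derivative deriv g 0) (at 0)"
    using holg by (intro holomorphic_derivI[of _ "ball 0 1"]) auto
  ultimately have "(h has_field_derivative deriv g 0 / of_real r) (at 0)"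
    unfolding h_def[abs_def] using den[of 0]
    by (auto intro!: derivative_eq_intros simp: a_def[symmetric] power2_eq_square)
  then have "deriv h 0 = deriv g 0 / of_real r"
    by (rule DERIV_imp_deriv)
  with r have "norm (deriv g 0) = norm (deriv h 0) * r"
    by (simp add: norm_divide)
  moreover have "norm (deriv h 0) \<le> 1"
    using Schwarz_Lemma(2)[OF holh h0 hlt, of 0] by simp
  ultimately show ?thesis
    using r by (simp add: r_def a_def mult_left_le_one_le)
qed

lemma schwarz_pick_deriv_0:
  assumes holg: "g holomorphic_on ball 0 1"
    and le: "\<And>z. z \<in> ball 0 1 \<Longrightarrow> norm (g z) \<le> 1"
  shows "norm (deriv g 0) \<le> 1 - (norm (g 0))\<^sup>2"
proof (cases "\<exists>z\<in>ball 0 1. norm (g z) = 1")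
  case True
  then obtain z where z: "z \<in> ball 0 1" "norm (g z) = 1" by blast
  have "g constant_on ball 0 1"
    by (rule maximum_modulus_principle[OF holg open_ball connected_ball open_ball subset_refl z(1)])
       (use le z in auto)
  then obtain c where c: "\<And>z. z \<in> ball 0 1 \<Longrightarrow> g z = c"
    by (auto simp: constant_on_def)
  have "deriv g 0 = deriv (\<lambda>_. c) 0"
    by (intro deriv_cong_ev eventually_nhds_in_open[of "ball 0 1", THEN eventually_mono])
       (auto simp: c)
  then show ?thesis
    using c[of 0] c[OF z(1)] z by simp
next
  case False
  then show ?thesis
    using schwarz_pick_deriv_0_strict[OF holg] le by force
qed

lemma fps_cayley_coeffs:
  fixes P G :: "'a::comm_ring_1 fps"
  assumes "P * (1 - fps_X * G) = 1 + fps_X * G"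
  shows "P $ 1 = 2 * G $ 0" and "P $ 2 = 2 * G $ 1 + 2 * (G $ 0)\<^sup>2"
proof -
  have eq: "P $ n - (fps_X * (P * G)) $ n = (1 + fps_X * G) $ n" for n
    using arg_cong[OF assms, of "\<lambda>F. F $ n"] by (simp add: algebra_simps)
  have P0: "P $ 0 = 1" using eq[of 0] by simp
  show P1: "P $ 1 = 2 * G $ 0" using eq[of 1] P0 by simp
  show "P $ 2 = 2 * G $ 1 + 2 * (G $ 0)\<^sup>2"
    using eq[of 2] P0 P1 by (simp add: numeral_2_eq_2 power2_eq_square algebra_simps)
qed

lemma caratheodory_schur_representation:
  assumes holp: "p holomorphic_on ball 0 1"
    and re: "\<And>z. z \<in> ball 0 1 \<Longrightarrow> Re (p z) > 0" and p0: "p 0 = 1"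
  obtains g where "g holomorphic_on ball 0 1" and "\<And>z. z \<in> ball 0 1 \<Longrightarrow> norm (g z) \<le> 1"
    and "\<And>z. z \<in> ball 0 1 \<Longrightarrow> p z * (1 - z * g z) = 1 + z * g z"
proof -
  have nz: "p z + 1 \<noteq> 0" if "z \<in> ball 0 1" for z
    using re[OF that] by (auto simp: complex_eq_iff)
  define w where "w z = (p z - 1) / (p z + 1)" for z
  have holw: "w holomorphic_on ball 0 1"
    unfolding w_def using holp nz by (intro holomorphic_intros) auto
  have w0: "w 0 = 0" by (simp add: w_def p0)
  have wlt: "norm (w z) < 1" if "norm z < 1" for z
    using norm_cayley_less_1[OF re] that by (simp add: w_def)
  obtain g where holg: "g holomorphic_on ball 0 1" and wg: "\<And>z. norm z < 1 \<Longrightarrow> w z = z * g z"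
    and dw0: "deriv w 0 = g 0"
    using Schwarz3[OF holw w0] by metis
  have "norm (g z) \<le> 1" if z: "z \<in> ball 0 1" for z
  proof (cases "z = 0")
    case True
    then show ?thesis using Schwarz_Lemma(2)[OF holw w0 wlt, of 0] dw0 by simp
  next
    case False
    have "norm z * norm (g z) \<le> norm z"
      using Schwarz_Lemma(1)[OF holw w0 wlt, of z] wg[of z] z by (simp add: norm_mult)
    then show ?thesis using False by simp
  qed
  moreover have "p z * (1 - z * g z) = 1 + z * g z" if "z \<in> ball 0 1" for z
    using nz[OF that] wg[of z] that by (simp add: w_def field_simps)
  ultimately show ?thesis
    using that holg by blast
qed

lemma caratheodory_coeff_2:
  assumes holp: "p holomorphic_on ball 0 1"
    and re: "\<And>z. z \<in> ball 0 1 \<Longrightarrow> Re (p z) > 0" and p0: "p 0 = 1"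
  shows "norm (taylor_coeff p 2 - (taylor_coeff p 1)\<^sup>2 / 2) \<le> 2 - (norm (taylor_coeff p 1))\<^sup>2 / 2"
proof -
  obtain g where holg: "g holomorphic_on ball 0 1" and "\<And>z. z \<in> ball 0 1 \<Longrightarrow> norm (g z) \<le> 1"
    and schur: "\<And>z. z \<in> ball 0 1 \<Longrightarrow> p z * (1 - z * g z) = 1 + z * g z"
    using caratheodory_schur_representation[OF holp re p0] by metis
  then have pick: "norm (deriv g 0) \<le> 1 - (norm (g 0))\<^sup>2"
    by (intro schwarz_pick_deriv_0)
  define P G where "P = fps_expansion p 0" and "G = fps_expansion g 0"
  have expp: "p has_fps_expansion P" and expg: "g has_fps_expansion G"
    unfolding P_def G_def using holp holg by (auto intro!: has_fps_expansion_fps_expansion[of "ball 0 1"])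
  have lhs: "(\<lambda>z. p z * (1 - z * g z)) has_fps_expansion P * (1 - fps_X * G)"
    and rhs: "(\<lambda>z. 1 + z * g z) has_fps_expansion 1 + fps_X * G"
    by (intro fps_expansion_intros expp expg)+
  have "\<forall>\<^sub>F z in nhds 0. p z * (1 - z * g z) = 1 + z * g z"
    by (intro eventually_nhds_in_open[of "ball 0 1", THEN eventually_mono]) (auto simp: schur)
  then have "(\<lambda>z. p z * (1 - z * g z)) has_fps_expansion 1 + fps_X * G"
    using rhs by (simp add: has_fps_expansion_cong)
  then have "P * (1 - fps_X * G) = 1 + fps_X * G"
    by (rule fps_expansion_unique_complex[OF lhs])
  then have p1: "taylor_coeff p 1 = 2 * taylor_coeff g 0"
    and p2: "taylor_coeff p 2 = 2 * taylor_coeff g 1 + 2 * (taylor_coeff g 0)\<^sup>2"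
    using fps_cayley_coeffs
    unfolding taylor_coeff_eq_fps_nth[OF expp] taylor_coeff_eq_fps_nth[OF expg] by blast+
  have g0: "taylor_coeff g 0 = g 0" and g1: "taylor_coeff g 1 = deriv g 0"
    by (simp_all add: taylor_coeff_def)
  have "taylor_coeff p 2 - (taylor_coeff p 1)\<^sup>2 / 2 = 2 * deriv g 0"
    unfolding p1 p2 g0 g1 by (simp add: power2_eq_square)
  moreover have "norm (taylor_coeff p 1) = 2 * norm (g 0)"
    unfolding p1 g0 by (simp add: norm_mult)
  ultimately show ?thesis
    using pick by (simp add: norm_mult power_mult_distrib)
qed

lemma taylor_coeff_quotient_deriv_combination:
  assumes holf: "f holomorphic_on ball 0 r" and holq: "q holomorphic_on ball 0 r" and "0 < r"
    and fq: "\<And>z. z \<in> ball 0 r \<Longrightarrow> f z = z * q z"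
  shows "taylor_coeff (\<lambda>z. a * q z + b * deriv f z) n
           = (a + b * of_nat (Suc n)) * taylor_coeff f (Suc n)"
proof -
  define F Q where "F = fps_expansion f 0" and "Q = fps_expansion q 0"
  have expf: "f has_fps_expansion F" and expq: "q has_fps_expansion Q"
    unfolding F_def Q_def using holf holq \<open>0 < r\<close>
    by (auto intro!: has_fps_expansion_fps_expansion[of "ball 0 r"])
  have "\<forall>\<^sub>F z in nhds 0. z * q z = f z"
    using \<open>0 < r\<close> by (intro eventually_nhds_in_open[of "ball 0 r", THEN eventually_mono]) (auto simp: fq)
  moreover have "(\<lambda>z. z * q z) has_fps_expansion fps_X * Q"
    by (intro fps_expansion_intros expq)
  ultimately have "f has_fps_expansion fps_X * Q"
    by (simp add: has_fps_expansion_cong)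
  then have FQ: "F = fps_X * Q"
    by (rule fps_expansion_unique_complex[OF expf])
  have "(\<lambda>z. a * q z + b * deriv f z) has_fps_expansion fps_const a * Q + fps_const b * fps_deriv F"
    by (intro fps_expansion_intros expq expf)
  moreover have "taylor_coeff f (Suc n) = Q $ n"
    by (simp add: taylor_coeff_eq_fps_nth[OF expf] FQ)
  ultimately show ?thesis
    by (simp add: taylor_coeff_eq_fps_nth FQ algebra_simps)
qed

lemma A_beta_associated_function:
  assumes "f \<in> A_beta \<beta>"
  obtains p where "p holomorphic_on ball 0 1" and "\<And>z. z \<in> ball 0 1 \<Longrightarrow> Re (p z) > 0"
    and "p 0 = 1"
    and "\<And>z. z \<in> ball 0 1 - {0} \<Longrightarrow> p z = of_real \<beta> * f z / z + of_real (1 - \<beta>) * deriv f z"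
    and "\<And>n. taylor_coeff p n = (1 + of_nat n * of_real (1 - \<beta>)) * taylor_coeff f (Suc n)"
proof -
  have holf: "f holomorphic_on ball 0 1" and f0: "f 0 = 0" and df0: "deriv f 0 = 1"
    and pos: "\<And>z. z \<in> ball 0 1 - {0} \<Longrightarrow> Re (of_real \<beta> * f z / z + of_real (1 - \<beta>) * deriv f z) > 0"
    using assms by (auto simp: A_beta_def)
  obtain q where holq: "q holomorphic_on ball 0 1" and fq: "\<And>z. norm z < 1 \<Longrightarrow> f z = z * q z"
    and q0: "deriv f 0 = q 0"
    using Schwarz3[OF holf f0] by metis
  define p where "p z = of_real \<beta> * q z + of_real (1 - \<beta>) * deriv f z" for z
  have holp: "p holomorphic_on ball 0 1"
    unfolding p_def using holq holf by (intro holomorphic_intros holomorphic_deriv) auto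
  have p_eq: "p z = of_real \<beta> * f z / z + of_real (1 - \<beta>) * deriv f z" if "z \<in> ball 0 1 - {0}" for z
    using that fq[of z] by (simp add: p_def)
  have p0: "p 0 = 1"
    using q0 df0 by (simp add: p_def algebra_simps)
  have "Re (p z) > 0" if "z \<in> ball 0 1" for z
    using that pos[of z] p_eq[of z] p0 by (cases "z = 0") auto
  moreover have "taylor_coeff p n = (1 + of_nat n * of_real (1 - \<beta>)) * taylor_coeff f (Suc n)" for n
    unfolding p_def[abs_def]
    by (subst taylor_coeff_quotient_deriv_combination[OF holf holq]) (auto simp: fq algebra_simps)
  ultimately show ?thesis
    using that holp p0 p_eq by blast
qed

lemma second_hankel_bound_from_caratheodory:
  fixes \<beta> :: real and a2 a3 p1 p2 :: complex
  assumes "0 \<le> \<beta>" and "\<beta> \<le> 1"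
    and p1: "p1 = of_real (2 - \<beta>) * a2" and p2: "p2 = of_real (3 - 2 * \<beta>) * a3"
    and caratheodory: "norm (p2 - p1\<^sup>2 / 2) \<le> 2 - (norm p1)\<^sup>2 / 2"
  shows "norm (a3 - a2\<^sup>2) \<le> 2 / (3 - 2 * \<beta>)"
proof -
  define B C where "B = 3 - 2 * \<beta>" and "C = 2 - \<beta>"
  define k where "k = 1 / C\<^sup>2 - 1 / (2 * B)"
  define x where "x = (norm p1)\<^sup>2"
  have B: "B > 0" and C: "C > 0"
    using assms by (auto simp: B_def C_def)
  have "C\<^sup>2 \<le> 2 * B"
    using assms mult_le_one[of \<beta> \<beta>] by (simp add: B_def C_def power2_eq_square algebra_simps)
  then have k: "k \<ge> 0"
    using B C by (simp add: k_def field_simps)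
  have "B \<le> C\<^sup>2"
    using zero_le_power2[of "1 - \<beta>"] by (simp add: B_def C_def power2_eq_square algebra_simps)
  then have BC: "1 / C\<^sup>2 \<le> 1 / B"
    using B by (simp add: frac_le)
  have "p1 = of_real C * a2" and "p2 = of_real B * a3"
    by (simp_all add: p1 p2 B_def C_def)
  then have "a3 - a2\<^sup>2 = (p2 - p1\<^sup>2 / 2) / of_real B - (1 / (of_real C)\<^sup>2 - 1 / (2 * of_real B)) * p1\<^sup>2"
    using B C by (simp add: field_simps)
  also have "1 / (of_real C)\<^sup>2 - 1 / (2 * of_real B) = (of_real k :: complex)"
    by (simp add: k_def)
  finally have "a3 - a2\<^sup>2 = (p2 - p1\<^sup>2 / 2) / of_real B - of_real k * p1\<^sup>2" .
  then have "norm (a3 - a2\<^sup>2) \<le> norm (p2 - p1\<^sup>2 / 2) / B + k * x"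
    using norm_triangle_ineq4[of "(p2 - p1\<^sup>2 / 2) / of_real B" "of_real k * p1\<^sup>2"] B k
    by (simp add: x_def norm_divide norm_mult norm_power)
  also have "\<dots> \<le> (2 - x / 2) / B + k * x"
    using caratheodory B by (simp add: x_def divide_right_mono)
  also have "\<dots> = 2 / B - x * (1 / B - 1 / C\<^sup>2)"
    using B C by (simp add: k_def field_simps)
  also have "\<dots> \<le> 2 / B"
    using BC by (simp add: x_def)
  finally show ?thesis by (simp add: B_def)
qed

lemma taylor_coeffs_one_plus_sq_div_one_minus_sq:
  defines "P \<equiv> \<lambda>z::complex. (1 + z\<^sup>2) / (1 - z\<^sup>2)"
  shows "taylor_coeff P 1 = 0" and "taylor_coeff P 2 = 2"
proof -
  define E :: "complex fps" where "E = (1 + fps_X * fps_X) / (1 - fps_X * fps_X)"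
  have expP: "P has_fps_expansion E"
    unfolding P_def E_def power2_eq_square by (intro fps_expansion_intros) auto
  have unit: "(1 - fps_X * fps_X :: complex fps) $ 0 \<noteq> 0"
    by simp
  then have "(1 - fps_X * fps_X :: complex fps) \<noteq> 0"
    by (metis fps_zero_nth)
  then have "E * (1 - fps_X * fps_X) = 1 + fps_X * fps_X"
    unfolding E_def using unit
    by (intro fps_times_divide_eq) (simp_all only: subdegree_eq_0 not_False_eq_True zero_le)
  then show "taylor_coeff P 1 = 0" and "taylor_coeff P 2 = 2"
    using fps_cayley_coeffs[of E fps_X] by (simp_all add: taylor_coeff_eq_fps_nth[OF expP])
qed

lemma A_beta_extremal_coeffs:
  assumes "f \<in> A_beta \<beta>" and "\<beta> \<le> 1"
    and ode: "\<forall>z\<in>ball 0 1 - {0}. of_real \<beta> * f z / z + of_real (1 - \<beta>) * deriv f z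
                                = (1 + z\<^sup>2) / (1 - z\<^sup>2)"
  shows "taylor_coeff f 2 = 0" and "taylor_coeff f 3 = 2 / of_real (3 - 2 * \<beta>)"
proof -
  obtain p where "p 0 = 1"
    and p_eq: "\<And>z. z \<in> ball 0 1 - {0} \<Longrightarrow> p z = of_real \<beta> * f z / z + of_real (1 - \<beta>) * deriv f z"
    and coeff: "\<And>n. taylor_coeff p n = (1 + of_nat n * of_real (1 - \<beta>)) * taylor_coeff f (Suc n)"
    using A_beta_associated_function[OF assms(1)] by metis
  have "p z = (1 + z\<^sup>2) / (1 - z\<^sup>2)" if "z \<in> ball 0 1" for z
    using that \<open>p 0 = 1\<close> p_eq[of z] ode by (cases "z = 0") auto
  then have "\<forall>\<^sub>F z in nhds 0. p z = (1 + z\<^sup>2) / (1 - z\<^sup>2)"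
    by (intro eventually_nhds_in_open[of "ball 0 1", THEN eventually_mono]) auto
  then have "taylor_coeff p n = taylor_coeff (\<lambda>z. (1 + z\<^sup>2) / (1 - z\<^sup>2)) n" for n
    by (simp add: taylor_coeff_def higher_deriv_cong_ev)
  then have "of_real (2 - \<beta>) * taylor_coeff f 2 = 0" and "of_real (3 - 2 * \<beta>) * taylor_coeff f 3 = 2"
    using coeff[of 1] coeff[of 2] taylor_coeffs_one_plus_sq_div_one_minus_sq
    by (simp_all add: numeral_2_eq_2 numeral_3_eq_3 algebra_simps)
  moreover have "(of_real (2 - \<beta>) :: complex) \<noteq> 0" and "(of_real (3 - 2 * \<beta>) :: complex) \<noteq> 0"
    unfolding of_real_eq_0_iff using assms(2) by linarith+
  ultimately show "taylor_coeff f 2 = 0" and "taylor_coeff f 3 = 2 / of_real (3 - 2 * \<beta>)"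
    by (simp_all add: field_simps)
qed

lemma fps_conv_radius_ge_1_if_bounded:
  fixes F :: "'a::{banach, real_normed_div_algebra} fps"
  assumes "\<And>n. norm (F $ n) \<le> C"
  shows "1 \<le> fps_conv_radius F"
  unfolding fps_conv_radius_def
proof (rule conv_radius_geI_ex')
  fix r :: real assume r: "0 < r" "ereal r < 1"
  show "summable (\<lambda>n. F $ n * of_real r ^ n)"
  proof (rule summable_comparison_test')
    show "summable (\<lambda>n. C * r ^ n)"
      using r by (intro summable_mult summable_geometric) auto
    show "norm (F $ n * of_real r ^ n) \<le> C * r ^ n" for n
      using assms[of n] r by (simp add: norm_mult norm_power mult_right_mono)
  qed
qed

lemma eval_fps_inverse_cayley_series:
  fixes u :: complex
  assumes "norm u < 1"
  shows "eval_fps (Abs_fps (\<lambda>n. if n = 0 then 1 else 2)) u = (1 + u) / (1 - u)"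
proof -
  have terms: "(if n = 0 then 1 else 2) * u ^ n = 2 * u ^ n - (if n = 0 then 1 else 0)" for n :: nat
    by simp
  have "1 - u \<noteq> 0"
    using assms by auto
  then have "2 * (1 / (1 - u)) - 1 = (1 + u) / (1 - u)"
    by (simp add: field_simps)
  moreover have "(\<lambda>n. 2 * u ^ n - (if n = 0 then 1 else 0)) sums (2 * (1 / (1 - u)) - 1)"
  proof (intro sums_diff sums_mult)
    show "(\<lambda>n. u ^ n) sums (1 / (1 - u))"
      using geometric_sums[OF assms] by simp
    show "(\<lambda>n. if n = 0 then 1 else 0) sums (1 :: complex)"
      using sums_single[of 0 "\<lambda>_. 1 :: complex"] by simp
  qed
  ultimately have "(\<lambda>n. (if n = 0 then 1 else 2) * u ^ n) sums ((1 + u) / (1 - u))"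
    unfolding terms by simp
  then show ?thesis
    by (simp add: eval_fps_def sums_iff)
qed

definition extremal_fps :: "real \<Rightarrow> complex fps" where
  "extremal_fps \<gamma> = Abs_fps (\<lambda>n. of_real (if n = 0 then 1 else 2 / (1 + 2 * real n * \<gamma>)))"

lemma norm_less_fps_conv_radius_extremal_fps:
  assumes "0 \<le> \<gamma>" and "norm u < 1"
  shows "ereal (norm u) < fps_conv_radius (extremal_fps \<gamma>)"
proof -
  have "2 / x \<le> 2" and "0 \<le> 2 / x" if "1 \<le> x" for x :: real
    using that by (simp_all add: divide_le_eq)
  moreover have "1 \<le> 1 + 2 * real n * \<gamma>" for n
    using assms by simp
  ultimately have "\<bar>if n = 0 then 1 else 2 / (1 + 2 * real n * \<gamma>)\<bar> \<le> 2" for n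
    by simp
  then have "norm (extremal_fps \<gamma> $ n) \<le> 2" for n
    by (simp only: extremal_fps_def fps_nth_Abs_fps norm_of_real)
  then have "1 \<le> fps_conv_radius (extremal_fps \<gamma>)"
    by (rule fps_conv_radius_ge_1_if_bounded)
  moreover have "ereal (norm u) < 1"
    using assms(2) by simp
  ultimately show ?thesis
    by (metis less_le_trans)
qed

lemma extremal_fps_ode:
  assumes "0 \<le> \<gamma>"
  shows "extremal_fps \<gamma> + fps_const (of_real (2 * \<gamma>)) * (fps_X * fps_deriv (extremal_fps \<gamma>))
           = Abs_fps (\<lambda>n. if n = 0 then 1 else 2)"
proof (rule fps_ext)
  fix n :: nat
  define x where "x = 1 + 2 * real n * \<gamma>"
  have "x > 0"
    unfolding x_def using assms by (intro add_pos_nonneg) auto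
  then have coeff: "(if n = 0 then 1 else 2 / x) * x = (if n = 0 then 1 else 2)"
  proof (cases "n = 0")
    case True
    then show ?thesis by (simp add: x_def)
  qed simp
  have "extremal_fps \<gamma> $ n * of_real x = of_real ((if n = 0 then 1 else 2 / x) * x)"
    by (simp only: extremal_fps_def fps_nth_Abs_fps x_def of_real_mult)
  also have "\<dots> = (if n = 0 then 1 else 2)"
    using coeff by simp
  finally have "extremal_fps \<gamma> $ n * of_real x = (if n = 0 then 1 else 2)" .
  moreover have "(extremal_fps \<gamma> + fps_const (of_real (2 * \<gamma>)) * (fps_X * fps_deriv (extremal_fps \<gamma>))) $ n
      = extremal_fps \<gamma> $ n * of_real x"
    by (cases n) (simp_all add: x_def algebra_simps)
  ultimately show "(extremal_fps \<gamma> + fps_const (of_real (2 * \<gamma>)) * (fps_X * fps_deriv (extremal_fps \<gamma>))) $ n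
               = Abs_fps (\<lambda>n. if n = 0 then 1 else 2) $ n"
    by simp
qed

lemma extremal_fps_ode_eval:
  fixes u :: complex
  assumes "0 \<le> \<gamma>" and "norm u < 1"
  shows "eval_fps (extremal_fps \<gamma>) u + of_real (2 * \<gamma>) * u * eval_fps (fps_deriv (extremal_fps \<gamma>)) u
           = (1 + u) / (1 - u)"
proof -
  define \<Psi> where "\<Psi> = extremal_fps \<gamma>"
  have r: "ereal (norm u) < fps_conv_radius \<Psi>"
    unfolding \<Psi>_def using assms by (rule norm_less_fps_conv_radius_extremal_fps)
  then have r': "ereal (norm u) < fps_conv_radius (fps_deriv \<Psi>)"
    using fps_conv_radius_deriv[of \<Psi>] by (rule less_le_trans)
  have "eval_fps \<Psi> u + of_real (2 * \<gamma>) * u * eval_fps (fps_deriv \<Psi>) u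
          = eval_fps (\<Psi> + fps_const (of_real (2 * \<gamma>)) * (fps_X * fps_deriv \<Psi>)) u"
  proof -
    have rX: "ereal (norm u) < fps_conv_radius (fps_X * fps_deriv \<Psi>)"
      using fps_conv_radius_mult[of fps_X "fps_deriv \<Psi>"] r' by simp
    then have "ereal (norm u) < fps_conv_radius (fps_const (of_real (2 * \<gamma>)) * (fps_X * fps_deriv \<Psi>))"
      using fps_conv_radius_mult[of "fps_const (of_real (2 * \<gamma>))" "fps_X * fps_deriv \<Psi>"] by simp
    then show ?thesis
      using r r' rX by (simp add: eval_fps_add eval_fps_mult mult.assoc)
  qed
  also have "\<dots> = (1 + u) / (1 - u)"
    using extremal_fps_ode[OF assms(1)] eval_fps_inverse_cayley_series[OF assms(2)] by (simp add: \<Psi>_def)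
  finally show ?thesis by (simp add: \<Psi>_def)
qed

lemma A_beta_extremal_function:
  assumes "0 \<le> \<beta>" and "\<beta> \<le> 1"
  shows "\<exists>f\<in>A_beta \<beta>. \<forall>z\<in>ball 0 1 - {0}.
           of_real \<beta> * f z / z + of_real (1 - \<beta>) * deriv f z = (1 + z\<^sup>2) / (1 - z\<^sup>2)"
proof -
  define \<Psi> where "\<Psi> = extremal_fps (1 - \<beta>)"
  define \<psi> \<psi>' where "\<psi> = eval_fps \<Psi>" and "\<psi>' = eval_fps (fps_deriv \<Psi>)"
  define f where "f z = z * \<psi> (z\<^sup>2)" for z :: complex
  have sq: "norm (z\<^sup>2) < 1" if "norm z < 1" for z :: complex
    using that by (simp add: norm_power abs_square_less_1)
  have D\<psi>: "(\<psi> has_field_derivative \<psi>' u) (at u)" if "norm u < 1" for u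
    unfolding \<psi>_def \<psi>'_def \<Psi>_def using assms(2) that
    by (intro has_field_derivative_eval_fps norm_less_fps_conv_radius_extremal_fps) auto
  have Df: "(f has_field_derivative \<psi> (z\<^sup>2) + 2 * z\<^sup>2 * \<psi>' (z\<^sup>2)) (at z)" if "norm z < 1" for z
  proof -
    have "((\<lambda>z. z\<^sup>2) has_field_derivative 2 * z) (at z)"
      by (auto intro!: derivative_eq_intros)
    from DERIV_chain2[OF D\<psi>[OF sq[OF that]] this]
    have "((\<lambda>z. \<psi> (z\<^sup>2)) has_field_derivative \<psi>' (z\<^sup>2) * (2 * z)) (at z)" .
    then show ?thesis
      unfolding f_def[abs_def] by (auto intro!: derivative_eq_intros simp: power2_eq_square algebra_simps)
  qed
  have holf: "f holomorphic_on ball 0 1"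
    using Df by (auto simp: holomorphic_on_open intro!: exI)
  have ode: "of_real \<beta> * f z / z + of_real (1 - \<beta>) * deriv f z = (1 + z\<^sup>2) / (1 - z\<^sup>2)"
    if z: "z \<in> ball 0 1 - {0}" for z
  proof -
    have "of_real \<beta> * f z / z + of_real (1 - \<beta>) * deriv f z
            = \<psi> (z\<^sup>2) + of_real (2 * (1 - \<beta>)) * z\<^sup>2 * \<psi>' (z\<^sup>2)"
      using z DERIV_imp_deriv[OF Df] by (simp add: f_def algebra_simps)
    also have "\<dots> = (1 + z\<^sup>2) / (1 - z\<^sup>2)"
      unfolding \<psi>_def \<psi>'_def \<Psi>_def using z assms(2) sq
      by (intro extremal_fps_ode_eval) auto
    finally show ?thesis .
  qed
  have "f \<in> A_beta \<beta>"
    unfolding A_beta_def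
  proof (intro CollectI conjI holf ballI)
    show "f 0 = 0" by (simp add: f_def)
    show "deriv f 0 = 1"
      using DERIV_imp_deriv[OF Df, of 0] by (simp add: \<psi>_def \<Psi>_def eval_fps_at_0 extremal_fps_def)
    show "Re (of_real \<beta> * f z / z + of_real (1 - \<beta>) * deriv f z) > 0" if "z \<in> ball 0 1 - {0}" for z
      using ode[OF that] Re_inverse_cayley_pos[OF sq] that by simp
  qed
  with ode show ?thesis by blast
qed

theorem mainTheorem6:
  fixes \<beta> :: real
  assumes "0 \<le> \<beta>" and "\<beta> \<le> 1"
  shows "(\<forall>f\<in>A_beta \<beta>.
            norm (taylor_coeff f 3 - (taylor_coeff f 2)\<^sup>2) \<le> 2 / (3 - 2 * \<beta>))
       \<and> (\<exists>f2\<in>A_beta \<beta>.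
            (\<forall>z\<in>ball 0 1 - {0}. of_real \<beta> * f2 z / z + of_real (1 - \<beta>) * deriv f2 z
                                  = (1 + z\<^sup>2) / (1 - z\<^sup>2)))
       \<and> (\<forall>f2\<in>A_beta \<beta>.
            (\<forall>z\<in>ball 0 1 - {0}. of_real \<beta> * f2 z / z + of_real (1 - \<beta>) * deriv f2 z
                                  = (1 + z\<^sup>2) / (1 - z\<^sup>2))
            \<longrightarrow> norm (taylor_coeff f2 3 - (taylor_coeff f2 2)\<^sup>2) = 2 / (3 - 2 * \<beta>))"
proof (intro conjI ballI impI)
  fix f assume "f \<in> A_beta \<beta>"
  obtain p where "p holomorphic_on ball 0 1" and "\<And>z. z \<in> ball 0 1 \<Longrightarrow> Re (p z) > 0"
    and "p 0 = 1"
    and coeff: "\<And>n. taylor_coeff p n = (1 + of_nat n * of_real (1 - \<beta>)) * taylor_coeff f (Suc n)"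
    using A_beta_associated_function[OF \<open>f \<in> A_beta \<beta>\<close>] by metis
  then have "norm (taylor_coeff p 2 - (taylor_coeff p 1)\<^sup>2 / 2) \<le> 2 - (norm (taylor_coeff p 1))\<^sup>2 / 2"
    by (intro caratheodory_coeff_2)
  moreover have "taylor_coeff p 1 = of_real (2 - \<beta>) * taylor_coeff f 2"
    and "taylor_coeff p 2 = of_real (3 - 2 * \<beta>) * taylor_coeff f 3"
    using coeff[of 1] coeff[of 2] by (simp_all add: numeral_2_eq_2 numeral_3_eq_3 algebra_simps)
  ultimately show "norm (taylor_coeff f 3 - (taylor_coeff f 2)\<^sup>2) \<le> 2 / (3 - 2 * \<beta>)"
    using second_hankel_bound_from_caratheodory[OF assms] by blast
next
  show "\<exists>f2\<in>A_beta \<beta>. \<forall>z\<in>ball 0 1 - {0}.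
          of_real \<beta> * f2 z / z + of_real (1 - \<beta>) * deriv f2 z = (1 + z\<^sup>2) / (1 - z\<^sup>2)"
    by (rule A_beta_extremal_function[OF assms])
next
  fix f assume "f \<in> A_beta \<beta>"
    and "\<forall>z\<in>ball 0 1 - {0}. of_real \<beta> * f z / z + of_real (1 - \<beta>) * deriv f z = (1 + z\<^sup>2) / (1 - z\<^sup>2)"
  then have "taylor_coeff f 2 = 0" and "taylor_coeff f 3 = 2 / of_real (3 - 2 * \<beta>)"
    by (rule A_beta_extremal_coeffs[OF _ assms(2)])+
  then have "norm (taylor_coeff f 3 - (taylor_coeff f 2)\<^sup>2) = norm (2 / (of_real (3 - 2 * \<beta>) :: complex))"
    by simp
  also have "\<dots> = 2 / (3 - 2 * \<beta>)"
    unfolding norm_divide norm_of_real using assms(2) by simp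
  finally show "norm (taylor_coeff f 3 - (taylor_coeff f 2)\<^sup>2) = 2 / (3 - 2 * \<beta>)" .
qed

end
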